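(* Let $L$ be a finite, bounded, simple, relatively complemented lattice. Then every tolerance on $L$ is transitive (hence a congruence), the only tolerances on $L$ are $\mathrm{id}_L$ and $L^2$, and consequently $\mathsf{C}(L)=\mathsf{Pol}_{0,1}(L)$.
   Context: A tolerance on $L$ is a reflexive, symmetric binary relation $T$ such that $(a,b),(c,d)\in T$ imply $(a\vee c,b\vee d),(a\wedge c,b\wedge d)\in T$; a congruence is a transitive tolerance. $L$ is simple if its only congruences are $\mathrm{id}_L=\{(x,x):x\in L\}$ and $L^2$. $L$ is relatively complemented if for every $a\le b$ and every $x\in[a,b]$ there is $y\in[a,b]$ with $x\wedge y=a$, $x\vee y=b$. An $n$-ary aggregation function on $L$ ($n\ge1$) is a nondecreasing map $A:L^n\to L$ with $A(0,\dots,0)=0$, $A(1,\dots,1)=1$; $\mathsf{C}(L)$ is the set of all of them. Polynomials on $L$ are functions $L^n\to L$ built from projections and constants by finitely many pointwise joins and meets; $\mathsf{Pol}_{0,1}(L)$ is the set of polynomials preserving $0$ and $1$. *)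

theory Defs
  imports Main
begin

definition tolerance :: "('a::lattice \<times> 'a) set \<Rightarrow> bool" where
  "tolerance T \<longleftrightarrow> refl T \<and> sym T \<and>
     (\<forall>a b c d. (a, b) \<in> T \<longrightarrow> (c, d) \<in> T \<longrightarrow>
        (sup a c, sup b d) \<in> T \<and> (inf a c, inf b d) \<in> T)"

definition congruence :: "('a::lattice \<times> 'a) set \<Rightarrow> bool" where
  "congruence T \<longleftrightarrow> tolerance T \<and> trans T"

definition simple_lattice :: "'a::lattice itself \<Rightarrow> bool" where
  "simple_lattice _ \<longleftrightarrow> (\<forall>T :: ('a \<times> 'a) set. congruence T \<longrightarrow> T = Id \<or> T = UNIV)"

definition relatively_complemented :: "'a::lattice itself \<Rightarrow> bool" where
  "relatively_complemented _ \<longleftrightarrow>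
     (\<forall>a b x :: 'a. a \<le> b \<longrightarrow> a \<le> x \<longrightarrow> x \<le> b \<longrightarrow>
        (\<exists>y. a \<le> y \<and> y \<le> b \<and> inf x y = a \<and> sup x y = b))"

text \<open>n-ary functions are modelled as maps functions with a finite
  (nonempty) index type 'n of cardinality n; the order on 'n \<Rightarrow> 'a is pointwise.\<close>
definition aggregation :: "(('n::finite \<Rightarrow> 'a) \<Rightarrow> 'a::bounded_lattice) \<Rightarrow> bool" where
  "aggregation A \<longleftrightarrow> mono A \<and> A (\<lambda>_. bot) = bot \<and> A (\<lambda>_. top) = top"

inductive_set polynomials :: "(('n \<Rightarrow> 'a) \<Rightarrow> 'a::lattice) set" where
  proj: "(\<lambda>x. x i) \<in> polynomials"
| const: "(\<lambda>x. c) \<in> polynomials"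
| join: "p \<in> polynomials \<Longrightarrow> q \<in> polynomials \<Longrightarrow> (\<lambda>x. sup (p x) (q x)) \<in> polynomials"
| meet: "p \<in> polynomials \<Longrightarrow> q \<in> polynomials \<Longrightarrow> (\<lambda>x. inf (p x) (q x)) \<in> polynomials"

definition Pol01 :: "(('n::finite \<Rightarrow> 'a) \<Rightarrow> 'a::bounded_lattice) set" where
  "Pol01 = {p \<in> polynomials. p (\<lambda>_. bot) = bot \<and> p (\<lambda>_. top) = top}"

end

(* Tolerances on a relatively complemented lattice are transitive: from (x, y), (y, z) \<in> T one
   gets (x \<sqinter> y \<sqinter> z, y) and (y, x \<squnion> y \<squnion> z) \<in> T; for a \<le> b \<le> c a relative complement of b
   in [a, c] turns (a, b), (b, c) \<in> T into (a, c) \<in> T; and tolerances are convex, which gives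
   (x, z) \<in> T. Hence on a simple such lattice every tolerance is trivial. Applied to the tolerance
   generated by (t \<sqinter> b, b) this yields, for every t with \<not> b \<le> t, a unary polynomial sending b to 1
   and t to 0; on a finite lattice their meet is the threshold function of b, meets of thresholds
   are the indicators of principal filters of L^n, and a monotone A is the join of the functions
   A(a) \<sqinter> [a \<le> x] over all a. *)

theory Submission
  imports Defs
begin

lemma tolerance_refl: "tolerance T \<Longrightarrow> (a, a) \<in> T"
  unfolding tolerance_def refl_on_def by blast

lemma tolerance_sym: "tolerance T \<Longrightarrow> (a, b) \<in> T \<Longrightarrow> (b, a) \<in> T"
  unfolding tolerance_def sym_def by blast

lemma tolerance_sup: "tolerance T \<Longrightarrow> (a, b) \<in> T \<Longrightarrow> (c, d) \<in> T \<Longrightarrow> (sup a c, sup b d) \<in> T"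
  unfolding tolerance_def by blast

lemma tolerance_inf: "tolerance T \<Longrightarrow> (a, b) \<in> T \<Longrightarrow> (c, d) \<in> T \<Longrightarrow> (inf a c, inf b d) \<in> T"
  unfolding tolerance_def by blast

lemma tolerance_convex:
  assumes T: "tolerance T" and ab: "(a, b) \<in> T"
    and "a \<le> u" "u \<le> b" "a \<le> v" "v \<le> b"
  shows "(u, v) \<in> T"
proof -
  have "(sup a u, sup b u) \<in> T" using tolerance_sup[OF T ab tolerance_refl[OF T]] .
  then have ub: "(u, b) \<in> T" using assms by (simp add: sup_absorb1 sup_absorb2)
  have "(sup b v, sup a v) \<in> T" using tolerance_sup[OF T tolerance_sym[OF T ab] tolerance_refl[OF T]] .
  then have bv: "(b, v) \<in> T" using assms by (simp add: sup_absorb1 sup_absorb2)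
  show ?thesis using tolerance_inf[OF T ub bv] assms by (simp add: inf_absorb1 inf_absorb2)
qed

lemma tolerance_trans_chain:
  assumes RC: "relatively_complemented TYPE('a::lattice)" and T: "tolerance (T :: 'a rel)"
    and "a \<le> b" "b \<le> c" and ab: "(a, b) \<in> T" and bc: "(b, c) \<in> T"
  shows "(a, c) \<in> T"
proof -
  obtain y where y: "a \<le> y" "y \<le> c" "inf b y = a" "sup b y = c"
    using RC assms(3,4) order_trans unfolding relatively_complemented_def by metis
  have "(a, y) \<in> T" using tolerance_inf[OF T bc tolerance_refl[OF T, of y]] y
    by (simp add: inf_absorb2)
  then show ?thesis using tolerance_sup[OF T ab] y by fastforce
qed

lemma tolerance_trans:
  assumes RC: "relatively_complemented TYPE('a::lattice)" and T: "tolerance (T :: 'a rel)"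
  shows "trans T"
proof (rule transI)
  fix x y z assume xy: "(x, y) \<in> T" and yz: "(y, z) \<in> T"
  have "(inf x y, y) \<in> T" using tolerance_inf[OF T xy tolerance_refl[OF T, of y]] by simp
  moreover have "(inf y z, y) \<in> T"
    using tolerance_sym[OF T tolerance_inf[OF T tolerance_refl[OF T, of y] yz]] by simp
  ultimately have low: "(inf x (inf y z), y) \<in> T"
    using tolerance_inf[OF T] by (fastforce simp: inf_assoc)
  have "(y, sup x y) \<in> T"
    using tolerance_sym[OF T tolerance_sup[OF T xy tolerance_refl[OF T, of y]]] by simp
  moreover have "(y, sup y z) \<in> T" using tolerance_sup[OF T tolerance_refl[OF T, of y] yz] by simp
  ultimately have high: "(y, sup x (sup y z)) \<in> T"
    using tolerance_sup[OF T] by (fastforce simp: sup_assoc)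
  have "(inf x (inf y z), sup x (sup y z)) \<in> T"
    by (rule tolerance_trans_chain[OF RC T _ _ low high])
      (auto intro: le_infI2 le_supI2)
  then show "(x, z) \<in> T"
    by (rule tolerance_convex[OF T]) (auto intro: le_infI2 le_supI2)
qed

lemma tolerance_trivial:
  assumes "simple_lattice TYPE('a::lattice)" "relatively_complemented TYPE('a)"
    and "tolerance (T :: 'a rel)"
  shows "T = Id \<or> T = UNIV"
  using assms tolerance_trans unfolding simple_lattice_def congruence_def by blast

lemma polynomials_mono: "p \<in> polynomials \<Longrightarrow> mono p"
proof (rule monoI)
  show "p \<in> polynomials \<Longrightarrow> x \<le> y \<Longrightarrow> p x \<le> p y" for x y
    by (induction p rule: polynomials.induct)
      (auto simp: le_fun_def intro: le_supI1 le_supI2 le_infI1 le_infI2)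
qed

lemma polynomials_comp:
  assumes "p \<in> polynomials" "\<And>i. g i \<in> polynomials"
  shows "(\<lambda>x. p (\<lambda>i. g i x)) \<in> polynomials"
  using assms by (induction p rule: polynomials.induct) (auto intro: polynomials.intros)

lemma polynomials_Inf_fin:
  fixes F :: "'b \<Rightarrow> ('n \<Rightarrow> 'a::bounded_lattice) \<Rightarrow> 'a"
  assumes "finite S" "\<And>s. s \<in> S \<Longrightarrow> F s \<in> polynomials"
  shows "(\<lambda>x. Inf_fin (insert top ((\<lambda>s. F s x) ` S))) \<in> polynomials"
  using assms
proof (induction S rule: finite_induct)
  case empty
  then show ?case using polynomials.const[of top] by simp
next
  case (insert s S)
  then show ?case using polynomials.meet[of "F s"]
    by (simp add: insert_commute[of top] Inf_fin.insert)
qed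

lemma polynomials_Sup_fin:
  fixes F :: "'b \<Rightarrow> ('n \<Rightarrow> 'a::bounded_lattice) \<Rightarrow> 'a"
  assumes "finite S" "\<And>s. s \<in> S \<Longrightarrow> F s \<in> polynomials"
  shows "(\<lambda>x. Sup_fin (insert bot ((\<lambda>s. F s x) ` S))) \<in> polynomials"
  using assms
proof (induction S rule: finite_induct)
  case empty
  then show ?case using polynomials.const[of bot] by simp
next
  case (insert s S)
  then show ?case using polynomials.join[of "F s"]
    by (simp add: insert_commute[of bot] Sup_fin.insert)
qed

text \<open>The tolerance generated by \<open>(a, b)\<close>: its pairs are \<open>(p(a,b), p(b,a))\<close> for binary
  polynomials \<open>p\<close>, i.e. polynomials with index type \<^typ>\<open>bool\<close>.\<close>
definition principal_tolerance :: "'a::lattice \<Rightarrow> 'a \<Rightarrow> 'a rel" where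
  "principal_tolerance a b =
     (\<lambda>p. (p (\<lambda>j. if j then a else b), p (\<lambda>j. if j then b else a))) ` polynomials"

lemma tolerance_principal_tolerance: "tolerance (principal_tolerance a b)"
proof -
  have swap: "(\<lambda>j. if \<not> j then c else d) = (\<lambda>j. if j then d else c)" for c d :: 'a
    by (rule ext) simp
  have "sym (principal_tolerance a b)"
    unfolding principal_tolerance_def
  proof (rule symI, elim imageE)
    fix p :: "(bool \<Rightarrow> 'a) \<Rightarrow> 'a" and c d
    assume p: "p \<in> polynomials"
      and cd: "(c, d) = (p (\<lambda>j. if j then a else b), p (\<lambda>j. if j then b else a))"
    have "(\<lambda>x. p (\<lambda>j. x (\<not> j))) \<in> polynomials"
      using p by (rule polynomials_comp) (rule polynomials.proj)
    then show "(d, c) \<in> (\<lambda>p. (p (\<lambda>j. if j then a else b), p (\<lambda>j. if j then b else a))) ` polynomials"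
      by (rule rev_image_eqI) (use cd in \<open>simp add: swap\<close>)
  qed
  moreover have "refl (principal_tolerance a b)"
    unfolding principal_tolerance_def refl_on_def by (auto intro!: image_eqI polynomials.const)
  ultimately show ?thesis
    unfolding tolerance_def principal_tolerance_def
    by (auto intro!: image_eqI polynomials.join polynomials.meet)
qed

lemma in_principal_tolerance: "(a, b) \<in> principal_tolerance a b"
  unfolding principal_tolerance_def by (rule image_eqI[OF _ polynomials.proj[of True]]) simp

definition unary_polynomials :: "('a::lattice \<Rightarrow> 'a) set" where
  "unary_polynomials = {f. (\<lambda>x :: unit \<Rightarrow> 'a. f (x ())) \<in> polynomials}"

lemma unary_polynomials_at:
  assumes "f \<in> unary_polynomials"
  shows "(\<lambda>x. f (x i)) \<in> polynomials"
  using polynomials_comp[of "\<lambda>x. f (x ())" "\<lambda>_ x. x i"] assms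
  by (simp add: unary_polynomials_def polynomials.proj)

lemma unary_polynomials_mono:
  assumes "f \<in> unary_polynomials"
  shows "mono f"
proof (rule monoI)
  fix s t :: 'a assume "s \<le> t"
  then have "(\<lambda>_. s) \<le> (\<lambda>_ :: unit. t)" by (simp add: le_fun_def)
  then show "f s \<le> f t"
    using assms polynomials_mono monoD unfolding unary_polynomials_def by fastforce
qed

text \<open>Simplicity forces the tolerance generated by \<open>(inf t b, b)\<close> to be all of \<open>L\<^sup>2\<close>, so some
  binary polynomial \<open>p\<close> maps \<open>(inf t b, b)\<close> to \<open>bot\<close> and \<open>(b, inf t b)\<close> to \<open>top\<close>;
  then \<open>s \<mapsto> p (inf s b, inf t b)\<close> separates \<open>b\<close> from \<open>t\<close>.\<close>
lemma separating_unary_polynomial: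
  assumes S: "simple_lattice TYPE('a::bounded_lattice)" and RC: "relatively_complemented TYPE('a)"
    and "\<not> b \<le> (t :: 'a)"
  shows "\<exists>f\<in>unary_polynomials. f b = top \<and> f t = bot"
proof -
  define m where "m = inf t b"
  have "m \<noteq> b" using assms(3) unfolding m_def by (metis inf.cobounded1)
  then have "principal_tolerance m b \<noteq> Id" using in_principal_tolerance[of m b] by auto
  then have "(bot, top) \<in> principal_tolerance m b"
    using tolerance_trivial[OF S RC tolerance_principal_tolerance] by blast
  then obtain p where p: "p \<in> polynomials"
    "p (\<lambda>j. if j then m else b) = bot" "p (\<lambda>j. if j then b else m) = top"
    unfolding principal_tolerance_def by auto
  define f where "f s = p (\<lambda>j. if j then inf s b else m)" for s
  have "(\<lambda>x :: unit \<Rightarrow> 'a. if j then inf (x ()) b else m) \<in> polynomials" for j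
    by (cases j) (auto intro: polynomials.intros)
  then have "f \<in> unary_polynomials"
    using polynomials_comp[OF p(1)] unfolding unary_polynomials_def f_def by fastforce
  moreover have "f b = top" using p(3) by (simp add: f_def cong: if_cong)
  moreover have "f t \<le> bot"
  proof -
    have "(\<lambda>j. if j then m else m) \<le> (\<lambda>j. if j then m else b)"
      by (simp add: le_fun_def m_def)
    then have "p (\<lambda>j. if j then m else m) \<le> p (\<lambda>j. if j then m else b)"
      using polynomials_mono[OF p(1)] monoD by blast
    then show ?thesis using p(2) by (simp add: f_def m_def cong: if_cong)
  qed
  ultimately show ?thesis using bot.extremum_uniqueI by blast
qed

lemma threshold_unary_polynomial:
  assumes S: "simple_lattice TYPE('a::{finite, bounded_lattice})"
    and RC: "relatively_complemented TYPE('a)"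
  shows "\<exists>e\<in>unary_polynomials. \<forall>s. e s = (if b \<le> s then top else (bot :: 'a))"
proof -
  obtain f where f: "\<And>t. \<not> b \<le> t \<Longrightarrow> f t \<in> unary_polynomials \<and> f t b = top \<and> f t t = bot"
    using separating_unary_polynomial[OF S RC] by metis
  define e where "e s = Inf_fin (insert top ((\<lambda>t. f t s) ` {t. \<not> b \<le> t}))" for s
  have "e \<in> unary_polynomials"
    using polynomials_Inf_fin[of "{t. \<not> b \<le> t}" "\<lambda>t x. f t (x ())"] f
    unfolding e_def unary_polynomials_def by simp
  moreover have "e s = (if b \<le> s then top else bot)" for s
  proof (cases "b \<le> s")
    case True
    have "top \<le> f t s" if "\<not> b \<le> t" for t
      using f[OF that] unary_polynomials_mono monoD True by metis
    then have "top \<le> e s" unfolding e_def by (auto intro: Inf_fin.boundedI)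
    then show ?thesis using True top.extremum_uniqueI by auto
  next
    case False
    then have "e s \<le> f s s" unfolding e_def by (auto intro: Inf_fin.coboundedI)
    then show ?thesis using False f bot.extremum_uniqueI by auto
  qed
  ultimately show ?thesis by blast
qed

lemma upper_set_indicator_polynomial:
  assumes S: "simple_lattice TYPE('a::{finite, bounded_lattice})"
    and RC: "relatively_complemented TYPE('a)"
  shows "(\<lambda>x :: 'n::finite \<Rightarrow> 'a. if a \<le> x then top else bot) \<in> polynomials"
proof -
  obtain e :: "'a \<Rightarrow> 'a \<Rightarrow> 'a"
    where e: "\<And>b. e b \<in> unary_polynomials" "\<And>b s. e b s = (if b \<le> s then top else bot)"
    using threshold_unary_polynomial[OF S RC] by metis
  define q where "q x = Inf_fin (insert top ((\<lambda>i. e (a i) (x i)) ` UNIV))" for x :: "'n \<Rightarrow> 'a"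
  have "q \<in> polynomials"
    unfolding q_def by (rule polynomials_Inf_fin) (simp_all add: unary_polynomials_at e(1))
  moreover have "q = (\<lambda>x. if a \<le> x then top else bot)"
  proof (rule ext)
    fix x show "q x = (if a \<le> x then top else bot)"
    proof (cases "a \<le> x")
      case True
      then have "top \<le> q x" unfolding q_def by (auto simp: e(2) le_fun_def intro: Inf_fin.boundedI)
      then show ?thesis using True top.extremum_uniqueI by auto
    next
      case False
      then obtain i where "\<not> a i \<le> x i" by (auto simp: le_fun_def)
      then have "q x \<le> bot" unfolding q_def using Inf_fin.coboundedI[of _ "e (a i) (x i)"] e(2) by auto
      then show ?thesis using False bot.extremum_uniqueI by auto
    qed
  qed
  ultimately show ?thesis by simp
qed

lemma mono_imp_polynomial:
  assumes S: "simple_lattice TYPE('a::{finite, bounded_lattice})"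
    and RC: "relatively_complemented TYPE('a)"
    and "mono (A :: ('n::finite \<Rightarrow> 'a) \<Rightarrow> 'a)"
  shows "A \<in> polynomials"
proof -
  define q where "q x = Sup_fin (insert bot ((\<lambda>a. inf (A a) (if a \<le> x then top else bot)) ` UNIV))"
    for x
  have "q \<in> polynomials"
    unfolding q_def
    by (rule polynomials_Sup_fin)
      (simp_all add: polynomials.meet polynomials.const upper_set_indicator_polynomial[OF S RC])
  moreover have "q = A"
  proof (rule ext, rule antisym)
    fix x
    show "q x \<le> A x"
      unfolding q_def by (intro Sup_fin.boundedI) (auto dest: monoD[OF \<open>mono A\<close>])
    show "A x \<le> q x"
      unfolding q_def by (rule Sup_fin.coboundedI) (auto intro: rev_image_eqI[of x])
  qed
  ultimately show ?thesis by simp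
qed

lemma aggregations_eq_Pol01:
  assumes "simple_lattice TYPE('a::{finite, bounded_lattice})"
    and "relatively_complemented TYPE('a)"
  shows "{A :: ('n::finite \<Rightarrow> 'a) \<Rightarrow> 'a. aggregation A} = Pol01"
  using mono_imp_polynomial[OF assms] polynomials_mono
  unfolding aggregation_def Pol01_def by blast

theorem mainTheorem6:
  assumes "simple_lattice TYPE('a::{finite, bounded_lattice})"
    and "relatively_complemented TYPE('a)"
  shows "(\<forall>T :: ('a \<times> 'a) set. tolerance T \<longrightarrow> trans T)
    \<and> (\<forall>T :: ('a \<times> 'a) set. tolerance T \<longrightarrow> T = Id \<or> T = UNIV)
    \<and> {A :: ('n::finite \<Rightarrow> 'a) \<Rightarrow> 'a. aggregation A} = Pol01"
  using tolerance_trans[OF assms(2)] tolerance_trivial[OF assms] aggregations_eq_Pol01[OF assms]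
  by blast

end
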